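(* Let $\mathcal L$ be a linearly ordered non-discrete MV-algebra and let $0\le p<q\le 1$ in $L$. Then $$[q,1]\sqsubseteq\!\!\to\,]p,1]=\,]q\to p,1].$$
   Context: $\mathcal L=(L,\oplus,\lnot,0)$ is a linearly ordered MV-algebra. We write $1=\lnot 0$ and $x\to y=\lnot x\oplus y$. Non-discrete means no element has an immediate successor or an immediate predecessor. We write $[p,1]=\{x: x\ge p\}$ and $]p,1]=\{x:x>p\}$. For an upward-closed $\mathcal F$ and $a\in L$, let $\mathcal F_a=\{z:z\to a\notin\mathcal F\}$. For upward-closed $\mathcal F\subseteq\mathcal G$ we put $\mathcal F\sqsubseteq\!\!\to\mathcal G=\bigcap_{a\in L\setminus\mathcal G}\mathcal F_a$. *)

theory Defs
  imports Main
begin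

definition mv_algebra :: "'a set \<Rightarrow> ('a \<Rightarrow> 'a \<Rightarrow> 'a) \<Rightarrow> ('a \<Rightarrow> 'a) \<Rightarrow> 'a \<Rightarrow> bool" where
  "mv_algebra L oplus neg zero \<longleftrightarrow>
     zero \<in> L \<and>
     (\<forall>x\<in>L. \<forall>y\<in>L. oplus x y \<in> L) \<and>
     (\<forall>x\<in>L. neg x \<in> L) \<and>
     (\<forall>x\<in>L. \<forall>y\<in>L. \<forall>z\<in>L. oplus x (oplus y z) = oplus (oplus x y) z) \<and>
     (\<forall>x\<in>L. \<forall>y\<in>L. oplus x y = oplus y x) \<and>
     (\<forall>x\<in>L. oplus x zero = x) \<and>
     (\<forall>x\<in>L. neg (neg x) = x) \<and>
     (\<forall>x\<in>L. oplus x (neg zero) = neg zero) \<and>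
     (\<forall>x\<in>L. \<forall>y\<in>L. oplus (neg (oplus (neg x) y)) y = oplus (neg (oplus (neg y) x)) x)"

definition mv_one :: "('a \<Rightarrow> 'a) \<Rightarrow> 'a \<Rightarrow> 'a" where
  "mv_one neg zero = neg zero"

definition mv_imp :: "('a \<Rightarrow> 'a \<Rightarrow> 'a) \<Rightarrow> ('a \<Rightarrow> 'a) \<Rightarrow> 'a \<Rightarrow> 'a \<Rightarrow> 'a" where
  "mv_imp oplus neg x y = oplus (neg x) y"

definition mv_le :: "('a \<Rightarrow> 'a \<Rightarrow> 'a) \<Rightarrow> ('a \<Rightarrow> 'a) \<Rightarrow> 'a \<Rightarrow> 'a \<Rightarrow> 'a \<Rightarrow> bool" where
  "mv_le oplus neg zero x y \<longleftrightarrow> mv_imp oplus neg x y = mv_one neg zero"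

definition mv_less :: "('a \<Rightarrow> 'a \<Rightarrow> 'a) \<Rightarrow> ('a \<Rightarrow> 'a) \<Rightarrow> 'a \<Rightarrow> 'a \<Rightarrow> 'a \<Rightarrow> bool" where
  "mv_less oplus neg zero x y \<longleftrightarrow> mv_le oplus neg zero x y \<and> x \<noteq> y"

definition mv_linear :: "'a set \<Rightarrow> ('a \<Rightarrow> 'a \<Rightarrow> 'a) \<Rightarrow> ('a \<Rightarrow> 'a) \<Rightarrow> 'a \<Rightarrow> bool" where
  "mv_linear L oplus neg zero \<longleftrightarrow>
     (\<forall>x\<in>L. \<forall>y\<in>L. mv_le oplus neg zero x y \<or> mv_le oplus neg zero y x)"

definition mv_nondiscrete :: "'a set \<Rightarrow> ('a \<Rightarrow> 'a \<Rightarrow> 'a) \<Rightarrow> ('a \<Rightarrow> 'a) \<Rightarrow> 'a \<Rightarrow> bool" where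
  "mv_nondiscrete L oplus neg zero \<longleftrightarrow>
     \<not> (\<exists>x\<in>L. \<exists>y\<in>L. mv_less oplus neg zero x y \<and>
            \<not> (\<exists>z\<in>L. mv_less oplus neg zero x z \<and> mv_less oplus neg zero z y)) \<and>
     \<not> (\<exists>y\<in>L. \<exists>x\<in>L. mv_less oplus neg zero x y \<and>
            \<not> (\<exists>z\<in>L. mv_less oplus neg zero x z \<and> mv_less oplus neg zero z y))"

definition mv_closed_up :: "'a set \<Rightarrow> ('a \<Rightarrow> 'a \<Rightarrow> 'a) \<Rightarrow> ('a \<Rightarrow> 'a) \<Rightarrow> 'a \<Rightarrow> 'a \<Rightarrow> 'a set" where
  "mv_closed_up L oplus neg zero p = {x\<in>L. mv_le oplus neg zero p x}"

definition mv_open_up :: "'a set \<Rightarrow> ('a \<Rightarrow> 'a \<Rightarrow> 'a) \<Rightarrow> ('a \<Rightarrow> 'a) \<Rightarrow> 'a \<Rightarrow> 'a \<Rightarrow> 'a set" where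
  "mv_open_up L oplus neg zero p = {x\<in>L. mv_less oplus neg zero p x}"

definition mv_Fa :: "'a set \<Rightarrow> ('a \<Rightarrow> 'a \<Rightarrow> 'a) \<Rightarrow> ('a \<Rightarrow> 'a) \<Rightarrow> 'a set \<Rightarrow> 'a \<Rightarrow> 'a set" where
  "mv_Fa L oplus neg F a = {z\<in>L. mv_imp oplus neg z a \<notin> F}"

definition mv_rel_arrow :: "'a set \<Rightarrow> ('a \<Rightarrow> 'a \<Rightarrow> 'a) \<Rightarrow> ('a \<Rightarrow> 'a) \<Rightarrow> 'a set \<Rightarrow> 'a set \<Rightarrow> 'a set" where
  "mv_rel_arrow L oplus neg F G = {z\<in>L. \<forall>a\<in>L - G. z \<in> mv_Fa L oplus neg F a}"

end

theory Submission
  imports Defs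
begin

(* Write F = [q,1] and G = ]p,1].  For z, a in L we have
     z \<in> F_a  \<longleftrightarrow>  \<not> q \<le> z \<rightarrow> a  \<longleftrightarrow>  \<not> z \<le> q \<rightarrow> a,
   by the exchange law  q \<le> z \<rightarrow> a \<longleftrightarrow> z \<le> q \<rightarrow> a  (commutativity and
   associativity of \<oplus>).  In a linearly ordered algebra the complement L - G is the
   down-set of p, and q \<rightarrow> a is monotone in a, so the condition "z \<in> F_a for all
   a \<le> p" collapses to its instance a = p, i.e. to  \<not> z \<le> q \<rightarrow> p, which by
   linearity says q \<rightarrow> p < z.
   The file first derives from the MV-axioms that the natural order is a partial
   order compatible with \<oplus> (inside a locale fixing the algebra), then the
   exchange law and monotonicity of \<rightarrow>, then the description of F_a and of the
   complement of ]p,1], and finally the theorem. *)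

locale mv =
  fixes L :: "'a set" and oplus :: "'a \<Rightarrow> 'a \<Rightarrow> 'a" and neg :: "'a \<Rightarrow> 'a" and zero :: 'a
  assumes mv_algebra: "mv_algebra L oplus neg zero"
begin

abbreviation le :: "'a \<Rightarrow> 'a \<Rightarrow> bool" (infix "\<preceq>" 50)
  where "x \<preceq> y \<equiv> mv_le oplus neg zero x y"

abbreviation imp :: "'a \<Rightarrow> 'a \<Rightarrow> 'a" (infixr "\<rightharpoonup>" 60)
  where "x \<rightharpoonup> y \<equiv> mv_imp oplus neg x y"

lemma zero_closed: "zero \<in> L"
  and oplus_closed: "x \<in> L \<Longrightarrow> y \<in> L \<Longrightarrow> oplus x y \<in> L"
  and neg_closed: "x \<in> L \<Longrightarrow> neg x \<in> L"
  and oplus_assoc: "x \<in> L \<Longrightarrow> y \<in> L \<Longrightarrow> w \<in> L \<Longrightarrow> oplus x (oplus y w) = oplus (oplus x y) w"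
  and oplus_comm: "x \<in> L \<Longrightarrow> y \<in> L \<Longrightarrow> oplus x y = oplus y x"
  and oplus_zero: "x \<in> L \<Longrightarrow> oplus x zero = x"
  and neg_neg: "x \<in> L \<Longrightarrow> neg (neg x) = x"
  and oplus_one: "x \<in> L \<Longrightarrow> oplus x (neg zero) = neg zero"
  and lukasiewicz: "x \<in> L \<Longrightarrow> y \<in> L \<Longrightarrow>
         oplus (neg (oplus (neg x) y)) y = oplus (neg (oplus (neg y) x)) x"
  using mv_algebra unfolding mv_algebra_def by blast+

lemma imp_closed: "x \<in> L \<Longrightarrow> y \<in> L \<Longrightarrow> x \<rightharpoonup> y \<in> L"
  unfolding mv_imp_def by (simp add: oplus_closed neg_closed)

lemma le_def': "x \<preceq> y \<longleftrightarrow> oplus (neg x) y = neg zero"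
  unfolding mv_le_def mv_imp_def mv_one_def ..

text \<open>Reflexivity: \<not>x \<oplus> x = 1, an instance of the Lukasiewicz axiom with 1.\<close>

lemma le_refl:
  assumes "x \<in> L"
  shows "x \<preceq> x"
proof -
  have "oplus (neg (oplus zero x)) x = oplus (neg (oplus (neg x) (neg zero))) (neg zero)"
    using lukasiewicz[of "neg zero" x] assms by (simp add: zero_closed neg_closed neg_neg)
  also have "\<dots> = neg zero"
    using assms by (simp add: oplus_one oplus_closed neg_closed zero_closed)
  finally show ?thesis
    using assms by (simp add: le_def' oplus_comm[of zero x] oplus_zero zero_closed)
qed

lemma le_decompose:
  assumes "x \<in> L" "y \<in> L" "x \<preceq> y"
  shows "y = oplus (neg (oplus (neg y) x)) x"
proof -
  have "oplus (neg (oplus (neg x) y)) y = oplus zero y"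
    using assms(3) zero_closed by (simp add: le_def' neg_neg)
  also have "\<dots> = y"
    using assms by (simp add: oplus_comm[of zero y] oplus_zero zero_closed)
  finally show ?thesis
    using lukasiewicz[OF assms(1,2)] by simp
qed

lemma le_antisym:
  assumes "x \<in> L" "y \<in> L" "x \<preceq> y" "y \<preceq> x"
  shows "x = y"
  using le_decompose[OF assms(1-3)] assms(4)
  by (simp add: le_def' neg_neg zero_closed oplus_comm[of zero x] oplus_zero assms(1))

lemma le_iff_exists:
  assumes "x \<in> L" "y \<in> L"
  shows "x \<preceq> y \<longleftrightarrow> (\<exists>w\<in>L. y = oplus x w)"
proof
  assume "x \<preceq> y"
  then have "y = oplus x (neg (oplus (neg y) x))"
    using le_decompose assms by (simp add: oplus_comm oplus_closed neg_closed)
  then show "\<exists>w\<in>L. y = oplus x w"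
    using assms by (blast intro: neg_closed oplus_closed)
next
  assume "\<exists>w\<in>L. y = oplus x w"
  then obtain w where w: "w \<in> L" "y = oplus x w" by blast
  have "oplus (neg x) y = oplus (oplus (neg x) x) w"
    using w assms by (simp add: oplus_assoc neg_closed)
  also have "\<dots> = neg zero"
    using le_refl[OF assms(1)] w
    by (simp add: le_def' oplus_comm[of "neg zero" w] oplus_one neg_closed zero_closed)
  finally show "x \<preceq> y" by (simp add: le_def')
qed

lemma le_trans:
  assumes "x \<in> L" "y \<in> L" "w \<in> L" "x \<preceq> y" "y \<preceq> w"
  shows "x \<preceq> w"
proof -
  obtain a where a: "a \<in> L" "y = oplus x a" using le_iff_exists assms by blast
  obtain b where b: "b \<in> L" "w = oplus y b" using le_iff_exists assms by blast
  have "w = oplus x (oplus a b)" using a b assms by (simp add: oplus_assoc)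
  then show ?thesis using le_iff_exists a b assms by (blast intro: oplus_closed)
qed

lemma oplus_mono:
  assumes "x \<in> L" "y \<in> L" "c \<in> L" "x \<preceq> y"
  shows "oplus c x \<preceq> oplus c y"
proof -
  obtain a where a: "a \<in> L" "y = oplus x a" using le_iff_exists assms by blast
  have "oplus c y = oplus (oplus c x) a" using a assms by (simp add: oplus_assoc)
  then show ?thesis using le_iff_exists a assms by (blast intro: oplus_closed)
qed

lemma imp_mono:
  assumes "q \<in> L" "a \<in> L" "b \<in> L" "a \<preceq> b"
  shows "q \<rightharpoonup> a \<preceq> q \<rightharpoonup> b"
  unfolding mv_imp_def using oplus_mono assms neg_closed by blast

text \<open>Exchange law: x \<le> y \<rightarrow> w iff y \<le> x \<rightarrow> w, since
  \<not>x \<oplus> (\<not>y \<oplus> w) = \<not>y \<oplus> (\<not>x \<oplus> w).\<close>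

lemma le_imp_exchange:
  assumes "x \<in> L" "y \<in> L" "w \<in> L"
  shows "x \<preceq> y \<rightharpoonup> w \<longleftrightarrow> y \<preceq> x \<rightharpoonup> w"
proof -
  have "oplus (neg x) (oplus (neg y) w) = oplus (neg y) (oplus (neg x) w)"
    using assms oplus_assoc[of "neg x" "neg y" w] oplus_assoc[of "neg y" "neg x" w]
      oplus_comm[of "neg x" "neg y"] by (simp add: neg_closed)
  then show ?thesis unfolding mv_le_def mv_imp_def by simp
qed

lemma Fa_closed_up_iff:
  assumes "q \<in> L" "a \<in> L"
  shows "z \<in> mv_Fa L oplus neg (mv_closed_up L oplus neg zero q) a \<longleftrightarrow>
         z \<in> L \<and> \<not> z \<preceq> q \<rightharpoonup> a"
  using le_imp_exchange[of z q a] imp_closed[of z a] assms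
  unfolding mv_Fa_def mv_closed_up_def by blast

end

locale linear_mv = mv +
  assumes linear: "mv_linear L oplus neg zero"
begin

lemma le_total: "x \<in> L \<Longrightarrow> y \<in> L \<Longrightarrow> x \<preceq> y \<or> y \<preceq> x"
  using linear unfolding mv_linear_def by blast

lemma not_le_iff_less:
  assumes "x \<in> L" "y \<in> L"
  shows "\<not> x \<preceq> y \<longleftrightarrow> mv_less oplus neg zero y x"
  using le_total[OF assms] le_refl[OF assms(1)] le_antisym[OF assms(2,1)]
  unfolding mv_less_def by blast

lemma not_in_open_up_iff:
  assumes "p \<in> L" "a \<in> L"
  shows "a \<notin> mv_open_up L oplus neg zero p \<longleftrightarrow> a \<preceq> p"
  using not_le_iff_less[OF assms(2,1)] assms(2) unfolding mv_open_up_def by blast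

text \<open>Membership in [q,1] \<sqsubseteq>\<rightarrow> ]p,1] is decided by the single witness a = p,
  because every a \<le> p gives q \<rightarrow> a \<le> q \<rightarrow> p.\<close>

lemma rel_arrow_closed_open_iff:
  assumes "p \<in> L" "q \<in> L"
  shows "z \<in> mv_rel_arrow L oplus neg (mv_closed_up L oplus neg zero q)
                          (mv_open_up L oplus neg zero p) \<longleftrightarrow>
         z \<in> L \<and> \<not> z \<preceq> q \<rightharpoonup> p"
proof -
  have "(\<forall>a\<in>L. a \<preceq> p \<longrightarrow> \<not> z \<preceq> q \<rightharpoonup> a) \<longleftrightarrow> \<not> z \<preceq> q \<rightharpoonup> p" if z: "z \<in> L"
  proof
    assume "\<forall>a\<in>L. a \<preceq> p \<longrightarrow> \<not> z \<preceq> q \<rightharpoonup> a"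
    then show "\<not> z \<preceq> q \<rightharpoonup> p" using le_refl assms(1) by blast
  next
    assume not_le: "\<not> z \<preceq> q \<rightharpoonup> p"
    show "\<forall>a\<in>L. a \<preceq> p \<longrightarrow> \<not> z \<preceq> q \<rightharpoonup> a"
    proof (intro ballI impI notI)
      fix a assume a: "a \<in> L" "a \<preceq> p" and "z \<preceq> q \<rightharpoonup> a"
      moreover have "q \<rightharpoonup> a \<preceq> q \<rightharpoonup> p" using imp_mono assms a by blast
      ultimately have "z \<preceq> q \<rightharpoonup> p"
        using le_trans[OF z imp_closed imp_closed] assms by blast
      then show False using not_le by contradiction
    qed
  qed
  then show ?thesis
    using not_in_open_up_iff[OF assms(1)] Fa_closed_up_iff[OF assms(2)]
    unfolding mv_rel_arrow_def by blast
qed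

end

theorem mainTheorem15:
  fixes L :: "'a set" and oplus :: "'a \<Rightarrow> 'a \<Rightarrow> 'a" and neg :: "'a \<Rightarrow> 'a"
    and zero p q :: 'a
  assumes "mv_algebra L oplus neg zero"
    and "mv_linear L oplus neg zero"
    and "mv_nondiscrete L oplus neg zero"
    and "p \<in> L" and "q \<in> L"
    and "mv_le oplus neg zero zero p"
    and "mv_less oplus neg zero p q"
    and "mv_le oplus neg zero q (mv_one neg zero)"
  shows "mv_rel_arrow L oplus neg (mv_closed_up L oplus neg zero q) (mv_open_up L oplus neg zero p)
         = mv_open_up L oplus neg zero (mv_imp oplus neg q p)"
proof -
  interpret linear_mv L oplus neg zero
    using assms(1,2) by unfold_locales
  have qp: "mv_imp oplus neg q p \<in> L" using imp_closed assms(4,5) by blast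
  show ?thesis
  proof (rule set_eqI)
    fix z
    show "z \<in> mv_rel_arrow L oplus neg (mv_closed_up L oplus neg zero q)
                (mv_open_up L oplus neg zero p) \<longleftrightarrow>
          z \<in> mv_open_up L oplus neg zero (mv_imp oplus neg q p)"
      using rel_arrow_closed_open_iff[OF assms(4,5)] not_le_iff_less[OF _ qp]
      unfolding mv_open_up_def by blast
  qed
qed

end
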